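(* Let $E$ be a $K$-contact Lie algebroid with structure $(F_E,\xi,\eta,g_E)$, fundamental form $\Omega_E$, and Levi-Civita connection $\nabla$ of $g_E$. Then for all $s,s_1,s_2\in\Gamma(E)$: $$(\nabla_{s_1}\eta)s_2=g_E(\nabla_{s_1}\xi,s_2)=\Omega_E(s_1,s_2),\qquad (\nabla_sF_E)\xi=-s+\eta(s)\xi.$$
   Context: A Lie algebroid $(E,\rho_E,[\cdot,\cdot]_E)$ over $M$ is a vector bundle with anchor $\rho_E:E\to TM$ and Lie bracket on $\Gamma(E)$ with $[s_1,fs_2]_E=f[s_1,s_2]_E+\rho_E(s_1)(f)s_2$. For a 1-form $\eta$, $(d_E\eta)(s_1,s_2)=\frac12\{\rho_E(s_1)(\eta(s_2))-\rho_E(s_2)(\eta(s_1))-\eta([s_1,s_2]_E)\}$. For $E$ of rank $2m+1$, an almost contact Riemannian structure $(F_E,\xi,\eta,g_E)$: endomorphism $F_E$, $\xi\in\Gamma(E)$, $\eta\in\Gamma(E^* )$, bundle metric $g_E$ with $F_E^2=-I_E+\eta\otimes\xi$, $\eta(\xi)=1$, $g_E(F_Es_1,F_Es_2)=g_E(s_1,s_2)-\eta(s_1)\eta(s_2)$; fundamental form $\Omega_E(s_1,s_2)=g_E(s_1,F_Es_2)$. $E$ is contact Riemannian if also $\eta\wedge(d_E\eta)^m$ vanishes nowhere and $d_E\eta=\Omega_E$; it is $K$-contact if moreover $\xi$ is Killing: $\rho_E(\xi)(g_E(s_1,s_2))-g_E([\xi,s_1]_E,s_2)-g_E(s_1,[\xi,s_2]_E)=0$.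 The Levi-Civita connection $\nabla$ is the unique torsion-free metric $E$-connection ($\nabla_{s_1}s_2-\nabla_{s_2}s_1=[s_1,s_2]_E$, $\rho_E(s)(g_E(s_1,s_2))=g_E(\nabla_ss_1,s_2)+g_E(s_1,\nabla_ss_2)$); $(\nabla_{s_1}\eta)(s_2)=\rho_E(s_1)(\eta(s_2))-\eta(\nabla_{s_1}s_2)$ and $(\nabla_sF_E)s'=\nabla_s(F_Es')-F_E(\nabla_ss')$. *)

theory Defs
  imports Complex_Main "HOL-Combinatorics.Permutations" "HOL-Library.Function_Algebras"
begin

text \<open>
The vector bundle E is given by
  its fibres: the fibre over x is the linear subspace fib x of an ambient real vector
  space 'v (every family of vector spaces embeds fibrewise into a common one).
  Smooth functions on M form the set C of real functions on M (a subalgebra),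
  smooth sections of E form the set Gam of maps s with s x in fib x; Gam is a
  C-module under pointwise operations.  Bundle maps (F_E, eta, g_E) are given
  fibrewise and send smooth sections to smooth sections / smooth functions.
  A vector field rho(s) is represented by its action on smooth functions
  (a derivation of C).
\<close>

definition fmul :: "('m \<Rightarrow> real) \<Rightarrow> ('m \<Rightarrow> 'v::real_vector) \<Rightarrow> ('m \<Rightarrow> 'v)" where
  "fmul f s = (\<lambda>x. f x *\<^sub>R s x)"

definition lin_on :: "'v::real_vector set \<Rightarrow> ('v \<Rightarrow> 'w::real_vector) \<Rightarrow> bool" where
  "lin_on V f \<longleftrightarrow> (\<forall>u\<in>V. \<forall>v\<in>V. f (u + v) = f u + f v) \<and> (\<forall>c. \<forall>u\<in>V. f (c *\<^sub>R u) = c *\<^sub>R f u)"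

definition smooth_algebra :: "('m \<Rightarrow> real) set \<Rightarrow> bool" where
  "smooth_algebra C \<longleftrightarrow> (\<forall>c. (\<lambda>_. c) \<in> C) \<and>
     (\<forall>f\<in>C. \<forall>h\<in>C. f + h \<in> C \<and> f * h \<in> C \<and> - f \<in> C)"

definition vector_bundle ::
  "('m \<Rightarrow> real) set \<Rightarrow> ('m \<Rightarrow> 'v::real_vector set) \<Rightarrow> ('m \<Rightarrow> 'v) set \<Rightarrow> nat \<Rightarrow> bool" where
  "vector_bundle C fib Gam r \<longleftrightarrow> smooth_algebra C \<and>
     (\<forall>x. subspace (fib x) \<and> dim (fib x) = r) \<and>
     (\<forall>s\<in>Gam. \<forall>x. s x \<in> fib x) \<and>
     (\<lambda>_. 0) \<in> Gam \<and>
     (\<forall>s\<in>Gam. \<forall>t\<in>Gam. s + t \<in> Gam) \<and>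
     (\<forall>f\<in>C. \<forall>s\<in>Gam. fmul f s \<in> Gam) \<and>
     (\<forall>x. \<forall>v\<in>fib x. \<exists>s\<in>Gam. s x = v)"

definition lie_algebroid ::
  "('m \<Rightarrow> real) set \<Rightarrow> ('m \<Rightarrow> 'v::real_vector set) \<Rightarrow> ('m \<Rightarrow> 'v) set \<Rightarrow> nat \<Rightarrow>
   (('m \<Rightarrow> 'v) \<Rightarrow> ('m \<Rightarrow> real) \<Rightarrow> ('m \<Rightarrow> real)) \<Rightarrow>
   (('m \<Rightarrow> 'v) \<Rightarrow> ('m \<Rightarrow> 'v) \<Rightarrow> ('m \<Rightarrow> 'v)) \<Rightarrow> bool" where
  "lie_algebroid C fib Gam r rho br \<longleftrightarrow> vector_bundle C fib Gam r \<and>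
     \<comment> \<open>anchor: C-linear in the section, derivation of smooth functions\<close>
     (\<forall>s\<in>Gam. \<forall>f\<in>C. rho s f \<in> C) \<and>
     (\<forall>s\<in>Gam. \<forall>t\<in>Gam. \<forall>h\<in>C. \<forall>f\<in>C. rho (fmul h s + t) f = h * rho s f + rho t f) \<and>
     (\<forall>s\<in>Gam. \<forall>f\<in>C. \<forall>h\<in>C. \<forall>c::real.
        rho s (f + h) = rho s f + rho s h \<and>
        rho s (\<lambda>x. c * f x) = (\<lambda>x. c * rho s f x) \<and>
        rho s (f * h) = f * rho s h + h * rho s f) \<and>
     \<comment> \<open>Lie bracket: real bilinear, skew, Jacobi, Leibniz\<close>
     (\<forall>s\<in>Gam. \<forall>t\<in>Gam. br s t \<in> Gam) \<and>
     (\<forall>s\<in>Gam. \<forall>t\<in>Gam. \<forall>u\<in>Gam. \<forall>c::real.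
        br s (t + u) = br s t + br s u \<and>
        br s (fmul (\<lambda>_. c) t) = fmul (\<lambda>_. c) (br s t) \<and>
        br s t = - br t s \<and>
        br s (br t u) + br t (br u s) + br u (br s t) = 0) \<and>
     (\<forall>s\<in>Gam. \<forall>t\<in>Gam. \<forall>f\<in>C. br s (fmul f t) = fmul f (br s t) + fmul (rho s f) t)"

definition almost_contact_riemannian ::
  "('m \<Rightarrow> real) set \<Rightarrow> ('m \<Rightarrow> 'v::real_vector set) \<Rightarrow> ('m \<Rightarrow> 'v) set \<Rightarrow>
   ('m \<Rightarrow> 'v \<Rightarrow> 'v) \<Rightarrow> ('m \<Rightarrow> 'v) \<Rightarrow> ('m \<Rightarrow> 'v \<Rightarrow> real) \<Rightarrow> ('m \<Rightarrow> 'v \<Rightarrow> 'v \<Rightarrow> real) \<Rightarrow> bool" where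
  "almost_contact_riemannian C fib Gam F xi eta g \<longleftrightarrow>
     \<comment> \<open>F endomorphism, eta 1-form, xi section, g bundle metric\<close>
     (\<forall>x. lin_on (fib x) (F x) \<and> (\<forall>v\<in>fib x. F x v \<in> fib x)) \<and>
     (\<forall>x. lin_on (fib x) (eta x)) \<and>
     (\<forall>x. \<forall>u\<in>fib x. lin_on (fib x) (g x u) \<and> (\<forall>v\<in>fib x. g x u v = g x v u)) \<and>
     (\<forall>x. \<forall>u\<in>fib x. u \<noteq> 0 \<longrightarrow> g x u u > 0) \<and>
     (\<forall>s\<in>Gam. (\<lambda>x. F x (s x)) \<in> Gam) \<and>
     (\<forall>s\<in>Gam. (\<lambda>x. eta x (s x)) \<in> C) \<and>
     (\<forall>s\<in>Gam. \<forall>t\<in>Gam. (\<lambda>x. g x (s x) (t x)) \<in> C) \<and>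
     xi \<in> Gam \<and>
     \<comment> \<open>structure equations\<close>
     (\<forall>x. \<forall>v\<in>fib x. F x (F x v) = - v + eta x v *\<^sub>R xi x) \<and>
     (\<forall>x. eta x (xi x) = 1) \<and>
     (\<forall>x. \<forall>u\<in>fib x. \<forall>v\<in>fib x. g x (F x u) (F x v) = g x u v - eta x u * eta x v)"

definition Omega_E :: "('m \<Rightarrow> 'v \<Rightarrow> 'v) \<Rightarrow> ('m \<Rightarrow> 'v \<Rightarrow> 'v \<Rightarrow> real) \<Rightarrow>
   ('m \<Rightarrow> 'v) \<Rightarrow> ('m \<Rightarrow> 'v) \<Rightarrow> ('m \<Rightarrow> real)" where
  "Omega_E F g s1 s2 = (\<lambda>x. g x (s1 x) (F x (s2 x)))"

definition d_E :: "(('m \<Rightarrow> 'v) \<Rightarrow> ('m \<Rightarrow> real) \<Rightarrow> ('m \<Rightarrow> real)) \<Rightarrow>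
   (('m \<Rightarrow> 'v) \<Rightarrow> ('m \<Rightarrow> 'v) \<Rightarrow> ('m \<Rightarrow> 'v)) \<Rightarrow> ('m \<Rightarrow> 'v \<Rightarrow> real) \<Rightarrow>
   ('m \<Rightarrow> 'v) \<Rightarrow> ('m \<Rightarrow> 'v) \<Rightarrow> ('m \<Rightarrow> real)" where
  "d_E rho br eta s1 s2 = (\<lambda>x. (1/2) * (rho s1 (\<lambda>y. eta y (s2 y)) x - rho s2 (\<lambda>y. eta y (s1 y)) x
        - eta x (br s1 s2 x)))"

text \<open>(eta \<and> omega^m)(s_0,...,s_2m) evaluated at x, up to a nonzero constant
  normalisation factor (irrelevant for vanishing).\<close>
definition wedge_eta_pow :: "nat \<Rightarrow> ('m \<Rightarrow> 'v \<Rightarrow> real) \<Rightarrow>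
   (('m \<Rightarrow> 'v) \<Rightarrow> ('m \<Rightarrow> 'v) \<Rightarrow> ('m \<Rightarrow> real)) \<Rightarrow> (nat \<Rightarrow> ('m \<Rightarrow> 'v)) \<Rightarrow> 'm \<Rightarrow> real" where
  "wedge_eta_pow m eta om ss x =
     (\<Sum>\<sigma> | \<sigma> permutes {..2*m}. of_int (sign \<sigma>) * eta x (ss (\<sigma> 0) x) *
        (\<Prod>i<m. om (ss (\<sigma> (2*i+1))) (ss (\<sigma> (2*i+2))) x))"

definition nowhere_vanishing_contact :: "('m \<Rightarrow> 'v) set \<Rightarrow> nat \<Rightarrow> ('m \<Rightarrow> 'v \<Rightarrow> real) \<Rightarrow>
   (('m \<Rightarrow> 'v) \<Rightarrow> ('m \<Rightarrow> 'v) \<Rightarrow> ('m \<Rightarrow> real)) \<Rightarrow> bool" where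
  "nowhere_vanishing_contact Gam m eta om \<longleftrightarrow>
     (\<forall>x. \<exists>ss. (\<forall>i\<le>2*m. ss i \<in> Gam) \<and> wedge_eta_pow m eta om ss x \<noteq> 0)"

definition K_contact_lie_algebroid where
  "K_contact_lie_algebroid C fib Gam m rho br F xi eta g \<longleftrightarrow>
     lie_algebroid C fib Gam (2*m+1) rho br \<and>
     almost_contact_riemannian C fib Gam F xi eta g \<and>
     \<comment> \<open>contact Riemannian\<close>
     nowhere_vanishing_contact Gam m eta (d_E rho br eta) \<and>
     (\<forall>s1\<in>Gam. \<forall>s2\<in>Gam. d_E rho br eta s1 s2 = Omega_E F g s1 s2) \<and>
     \<comment> \<open>xi is Killing\<close>
     (\<forall>s1\<in>Gam. \<forall>s2\<in>Gam.
        rho xi (\<lambda>x. g x (s1 x) (s2 x)) - (\<lambda>x. g x (br xi s1 x) (s2 x))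
          - (\<lambda>x. g x (s1 x) (br xi s2 x)) = 0)"

definition levi_civita where
  "levi_civita C Gam rho br g nabla \<longleftrightarrow>
     (\<forall>s\<in>Gam. \<forall>t\<in>Gam. nabla s t \<in> Gam) \<and>
     (\<forall>s\<in>Gam. \<forall>s'\<in>Gam. \<forall>t\<in>Gam. \<forall>f\<in>C. nabla (fmul f s + s') t = fmul f (nabla s t) + nabla s' t) \<and>
     (\<forall>s\<in>Gam. \<forall>t\<in>Gam. \<forall>t'\<in>Gam. \<forall>f\<in>C.
        nabla s (fmul f t + t') = fmul f (nabla s t) + fmul (rho s f) t + nabla s t') \<and>
     (\<forall>s1\<in>Gam. \<forall>s2\<in>Gam. nabla s1 s2 - nabla s2 s1 = br s1 s2) \<and>
     (\<forall>s\<in>Gam. \<forall>s1\<in>Gam. \<forall>s2\<in>Gam.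
        rho s (\<lambda>x. g x (s1 x) (s2 x)) =
          (\<lambda>x. g x (nabla s s1 x) (s2 x) + g x (s1 x) (nabla s s2 x)))"

end

theory Submission
  imports Defs
begin

text \<open>
  Since g(xi, -) = eta and nabla is metric, (nabla_s1 eta) s2 = g(nabla_s1 xi, s2).  Because xi
  is Killing and nabla is torsion-free, the form (s1, s2) \<mapsto> g(nabla_s1 xi, s2) is skew, so it
  equals its own antisymmetrisation, which is d_E eta = Omega_E.  Comparing with
  Omega_E(s1, s2) = -g(F s1, s2) and using that g is positive definite gives nabla_s xi = -F s;
  as F xi = 0 this yields (nabla_s F) xi = -F(nabla_s xi) = F^2 s = -s + eta(s) xi.
\<close>

lemma lin_on_add: "lin_on V f \<Longrightarrow> u \<in> V \<Longrightarrow> v \<in> V \<Longrightarrow> f (u + v) = f u + f v"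
  unfolding lin_on_def by blast

lemma lin_on_scaleR: "lin_on V f \<Longrightarrow> u \<in> V \<Longrightarrow> f (c *\<^sub>R u) = c *\<^sub>R f u"
  unfolding lin_on_def by blast

lemma lin_on_neg: "lin_on V f \<Longrightarrow> u \<in> V \<Longrightarrow> f (- u) = - f u"
  using lin_on_scaleR[of V f u "-1"] by simp

lemma lin_on_diff:
  assumes "lin_on V f" "subspace V" "u \<in> V" "v \<in> V"
  shows "f (u - v) = f u - f v"
  using lin_on_add[OF assms(1,3), of "- v"] lin_on_neg[OF assms(1,4)] subspace_neg[OF assms(2,4)]
  by simp

lemma lin_on_zero: "lin_on V f \<Longrightarrow> subspace V \<Longrightarrow> f 0 = 0"
  using lin_on_scaleR[of V f 0 0] subspace_0 by fastforce

locale almost_contact_bundle =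
  fixes C :: "('m \<Rightarrow> real) set" and fib :: "'m \<Rightarrow> 'v::real_vector set"
    and Gam :: "('m \<Rightarrow> 'v) set" and r :: nat
    and F :: "'m \<Rightarrow> 'v \<Rightarrow> 'v" and xi :: "'m \<Rightarrow> 'v"
    and eta :: "'m \<Rightarrow> 'v \<Rightarrow> real" and g :: "'m \<Rightarrow> 'v \<Rightarrow> 'v \<Rightarrow> real"
  assumes vector_bundle: "vector_bundle C fib Gam r"
    and almost_contact_structure: "almost_contact_riemannian C fib Gam F xi eta g"
begin

lemma subspace_fib: "subspace (fib x)"
  and section_in_fib: "s \<in> Gam \<Longrightarrow> s x \<in> fib x"
  and fib_has_section: "v \<in> fib x \<Longrightarrow> \<exists>s\<in>Gam. s x = v"
  and zero_section: "(\<lambda>_. 0) \<in> Gam"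
  and one_smooth: "(\<lambda>_. 1) \<in> C"
  using vector_bundle unfolding vector_bundle_def smooth_algebra_def by auto

lemma F_lin: "lin_on (fib x) (F x)"
  and F_in_fib: "v \<in> fib x \<Longrightarrow> F x v \<in> fib x"
  and eta_lin: "lin_on (fib x) (eta x)"
  and g_lin: "u \<in> fib x \<Longrightarrow> lin_on (fib x) (g x u)"
  and g_sym: "u \<in> fib x \<Longrightarrow> v \<in> fib x \<Longrightarrow> g x u v = g x v u"
  and g_pos: "u \<in> fib x \<Longrightarrow> u \<noteq> 0 \<Longrightarrow> g x u u > 0"
  and xi_section: "xi \<in> Gam"
  and F_F: "v \<in> fib x \<Longrightarrow> F x (F x v) = - v + eta x v *\<^sub>R xi x"
  and eta_xi: "eta x (xi x) = 1"
  and g_F_F: "u \<in> fib x \<Longrightarrow> v \<in> fib x \<Longrightarrow> g x (F x u) (F x v) = g x u v - eta x u * eta x v"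
  using almost_contact_structure unfolding almost_contact_riemannian_def by auto

lemma xi_in_fib: "xi x \<in> fib x"
  using section_in_fib[OF xi_section] .

lemma g_add_left:
  assumes "u \<in> fib x" "v \<in> fib x" "w \<in> fib x"
  shows "g x (v + w) u = g x v u + g x w u"
proof -
  have "g x (v + w) u = g x u (v + w)"
    using g_sym subspace_add[OF subspace_fib] assms by simp
  also have "\<dots> = g x u v + g x u w"
    using lin_on_add[OF g_lin] assms by simp
  finally show ?thesis
    using g_sym assms by simp
qed

lemma g_diff_left:
  assumes "u \<in> fib x" "v \<in> fib x" "w \<in> fib x"
  shows "g x (v - w) u = g x v u - g x w u"
proof -
  have "g x (v - w) u = g x u (v - w)"
    using g_sym subspace_diff[OF subspace_fib] assms by simp
  also have "\<dots> = g x u v - g x u w"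
    using lin_on_diff[OF g_lin subspace_fib] assms by simp
  finally show ?thesis
    using g_sym assms by simp
qed

lemma g_diff_right: "u \<in> fib x \<Longrightarrow> v \<in> fib x \<Longrightarrow> w \<in> fib x \<Longrightarrow> g x u (v - w) = g x u v - g x u w"
  using lin_on_diff[OF g_lin subspace_fib] .

lemma scaleR_xi_eq_0: "c *\<^sub>R xi x = 0 \<Longrightarrow> c = 0"
  using arg_cong[of _ _ "eta x"] lin_on_scaleR[OF eta_lin xi_in_fib]
    lin_on_zero[OF eta_lin subspace_fib] eta_xi by fastforce

text \<open>Apply F to F^2 v = -v + eta(v) xi and compare with F^2 (F v).\<close>
lemma eta_F_scaleR_xi:
  assumes v: "v \<in> fib x"
  shows "eta x (F x v) *\<^sub>R xi x = eta x v *\<^sub>R F x (xi x)"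
proof -
  have "- F x v + eta x (F x v) *\<^sub>R xi x = F x (F x (F x v))"
    using F_F[OF F_in_fib[OF v]] by simp
  also have "\<dots> = F x (- v + eta x v *\<^sub>R xi x)"
    using F_F[OF v] by simp
  also have "\<dots> = - F x v + eta x v *\<^sub>R F x (xi x)"
    using lin_on_add[OF F_lin subspace_neg[OF subspace_fib v] subspace_scale[OF subspace_fib xi_in_fib]]
      lin_on_neg[OF F_lin v] lin_on_scaleR[OF F_lin xi_in_fib] by simp
  finally show ?thesis by simp
qed

lemma F_xi: "F x (xi x) = 0"
proof -
  define c where "c = eta x (F x (xi x))"
  have F_xi_eq: "F x (xi x) = c *\<^sub>R xi x"
    using eta_F_scaleR_xi[OF xi_in_fib] eta_xi c_def by simp
  have "(c * c) *\<^sub>R xi x = F x (F x (xi x))"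
    using F_xi_eq lin_on_scaleR[OF F_lin xi_in_fib] by simp
  also have "\<dots> = 0"
    using F_F[OF xi_in_fib] eta_xi by simp
  finally show ?thesis
    using F_xi_eq scaleR_xi_eq_0 by simp
qed

lemma eta_F: "v \<in> fib x \<Longrightarrow> eta x (F x v) = 0"
  using eta_F_scaleR_xi F_xi scaleR_xi_eq_0 by (metis scaleR_zero_right)

lemma g_xi:
  assumes v: "v \<in> fib x"
  shows "g x (xi x) v = eta x v"
proof -
  have "g x 0 (F x v) = 0"
    using g_sym[OF subspace_0[OF subspace_fib] F_in_fib[OF v]]
      lin_on_zero[OF g_lin[OF F_in_fib[OF v]] subspace_fib] by simp
  then show ?thesis
    using g_F_F[OF xi_in_fib v] F_xi eta_xi by simp
qed

lemma g_F_skew: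
  assumes u: "u \<in> fib x" and v: "v \<in> fib x"
  shows "g x u (F x v) = - g x (F x u) v"
proof -
  have Fu: "F x u \<in> fib x"
    using F_in_fib[OF u] .
  have "g x u (F x v) = g x (F x u) (F x (F x v))"
    using g_F_F[OF u F_in_fib[OF v]] eta_F[OF v] by simp
  also have "\<dots> = - g x (F x u) v + eta x v * g x (F x u) (xi x)"
    using F_F[OF v] lin_on_add[OF g_lin[OF Fu] subspace_neg[OF subspace_fib v]
        subspace_scale[OF subspace_fib xi_in_fib]]
      lin_on_neg[OF g_lin[OF Fu] v] lin_on_scaleR[OF g_lin[OF Fu] xi_in_fib] by simp
  also have "g x (F x u) (xi x) = 0"
    using g_sym[OF Fu xi_in_fib] g_xi[OF Fu] eta_F[OF u] by simp
  finally show ?thesis by simp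
qed

end

locale almost_contact_levi_civita = almost_contact_bundle +
  fixes rho :: "('m \<Rightarrow> 'v::real_vector) \<Rightarrow> ('m \<Rightarrow> real) \<Rightarrow> ('m \<Rightarrow> real)"
    and br :: "('m \<Rightarrow> 'v) \<Rightarrow> ('m \<Rightarrow> 'v) \<Rightarrow> ('m \<Rightarrow> 'v)"
    and nabla :: "('m \<Rightarrow> 'v) \<Rightarrow> ('m \<Rightarrow> 'v) \<Rightarrow> ('m \<Rightarrow> 'v)"
  assumes levi_civita: "levi_civita C Gam rho br g nabla"
begin

lemma nabla_section: "s \<in> Gam \<Longrightarrow> t \<in> Gam \<Longrightarrow> nabla s t \<in> Gam"
  and nabla_leibniz: "s \<in> Gam \<Longrightarrow> t \<in> Gam \<Longrightarrow> t' \<in> Gam \<Longrightarrow> f \<in> C \<Longrightarrow>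
      nabla s (fmul f t + t') = fmul f (nabla s t) + fmul (rho s f) t + nabla s t'"
  using levi_civita unfolding levi_civita_def by blast+

lemma torsion_free:
  assumes "s1 \<in> Gam" "s2 \<in> Gam"
  shows "br s1 s2 x = nabla s1 s2 x - nabla s2 s1 x"
proof -
  have "nabla s1 s2 - nabla s2 s1 = br s1 s2"
    using levi_civita assms unfolding levi_civita_def by blast
  then show ?thesis by (auto simp: fun_eq_iff)
qed

lemma metric:
  assumes "s \<in> Gam" "s1 \<in> Gam" "s2 \<in> Gam"
  shows "rho s (\<lambda>x. g x (s1 x) (s2 x)) x = g x (nabla s s1 x) (s2 x) + g x (s1 x) (nabla s s2 x)"
proof -
  have "rho s (\<lambda>x. g x (s1 x) (s2 x)) = (\<lambda>x. g x (nabla s s1 x) (s2 x) + g x (s1 x) (nabla s s2 x))"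
    using levi_civita assms unfolding levi_civita_def by blast
  then show ?thesis by simp
qed

lemma nabla_in_fib: "s \<in> Gam \<Longrightarrow> t \<in> Gam \<Longrightarrow> nabla s t x \<in> fib x"
  using section_in_fib nabla_section by blast

lemma nabla_zero: "s \<in> Gam \<Longrightarrow> nabla s (\<lambda>_. 0) = (\<lambda>_. 0)"
  using nabla_leibniz[OF _ zero_section zero_section one_smooth]
  by (simp add: fmul_def plus_fun_def fun_eq_iff)

lemma rho_eta:
  assumes "s1 \<in> Gam" "s2 \<in> Gam"
  shows "rho s1 (\<lambda>x. eta x (s2 x)) x = g x (nabla s1 xi x) (s2 x) + eta x (nabla s1 s2 x)"
proof -
  have "(\<lambda>x. eta x (s2 x)) = (\<lambda>x. g x (xi x) (s2 x))"
    using g_xi section_in_fib assms by auto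
  then show ?thesis
    using metric[OF assms(1) xi_section assms(2)] g_xi nabla_in_fib assms by simp
qed

lemma killing_imp_nabla_xi_skew:
  assumes killing: "\<forall>s1\<in>Gam. \<forall>s2\<in>Gam.
        rho xi (\<lambda>x. g x (s1 x) (s2 x)) - (\<lambda>x. g x (br xi s1 x) (s2 x))
          - (\<lambda>x. g x (s1 x) (br xi s2 x)) = 0"
    and s: "s1 \<in> Gam" "s2 \<in> Gam"
  shows "g x (nabla s1 xi x) (s2 x) = - g x (nabla s2 xi x) (s1 x)"
proof -
  have in_fib: "nabla xi s1 x \<in> fib x" "nabla s1 xi x \<in> fib x" "nabla xi s2 x \<in> fib x"
      "nabla s2 xi x \<in> fib x" "s1 x \<in> fib x" "s2 x \<in> fib x"
    using nabla_in_fib section_in_fib s xi_section by auto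
  have "g x (nabla xi s1 x) (s2 x) + g x (s1 x) (nabla xi s2 x)
      = g x (br xi s1 x) (s2 x) + g x (s1 x) (br xi s2 x)"
    using fun_cong[OF killing[rule_format, OF s], of x] metric[OF xi_section s] by simp
  also have "\<dots> = g x (nabla xi s1 x) (s2 x) - g x (nabla s1 xi x) (s2 x)
      + g x (s1 x) (nabla xi s2 x) - g x (s1 x) (nabla s2 xi x)"
    using torsion_free[OF xi_section] s g_diff_left g_diff_right in_fib by simp
  finally show ?thesis
    using g_sym[OF in_fib(5,4)] by simp
qed

lemma d_E_eta_eq_nabla_xi:
  assumes skew: "\<And>s1 s2. s1 \<in> Gam \<Longrightarrow> s2 \<in> Gam \<Longrightarrow>
      g x (nabla s1 xi x) (s2 x) = - g x (nabla s2 xi x) (s1 x)"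
    and s: "s1 \<in> Gam" "s2 \<in> Gam"
  shows "d_E rho br eta s1 s2 x = g x (nabla s1 xi x) (s2 x)"
  using rho_eta[OF s] rho_eta[OF s(2) s(1)] skew[OF s] torsion_free[OF s]
    lin_on_diff[OF eta_lin subspace_fib nabla_in_fib[OF s] nabla_in_fib[OF s(2) s(1)]]
  unfolding d_E_def by simp

text \<open>
  Testing against a section through w = nabla_s xi + F s gives g(w, w) = 0 by skewness of F.
\<close>
lemma nabla_xi_eq_neg_F:
  assumes Omega: "\<And>s1 s2. s1 \<in> Gam \<Longrightarrow> s2 \<in> Gam \<Longrightarrow>
      g x (nabla s1 xi x) (s2 x) = Omega_E F g s1 s2 x"
    and s: "s \<in> Gam"
  shows "nabla s xi x = - F x (s x)"
proof -
  have in_fib: "nabla s xi x \<in> fib x" "s x \<in> fib x" "F x (s x) \<in> fib x"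
    using nabla_in_fib section_in_fib F_in_fib s xi_section by auto
  define w where "w = nabla s xi x + F x (s x)"
  have w: "w \<in> fib x"
    using subspace_add[OF subspace_fib in_fib(1,3)] w_def by simp
  obtain t where t: "t \<in> Gam" "t x = w"
    using fib_has_section[OF w] by blast
  have "g x w w = g x (nabla s xi x) (t x) + g x (F x (s x)) (t x)"
    using g_add_left in_fib w t w_def by simp
  also have "\<dots> = g x (s x) (F x (t x)) + g x (F x (s x)) (t x)"
    using Omega[OF s t(1)] unfolding Omega_E_def by simp
  also have "\<dots> = 0"
    using g_F_skew in_fib t w by simp
  finally have "w = 0"
    using g_pos[OF w] by force
  then show ?thesis
    unfolding w_def by (simp add: eq_neg_iff_add_eq_0)
qed

lemma nabla_F_xi:
  assumes nabla_xi: "\<And>x. nabla s xi x = - F x (s x)" and s: "s \<in> Gam"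
  shows "nabla s (\<lambda>x. F x (xi x)) - (\<lambda>x. F x (nabla s xi x)) = (\<lambda>x. - s x + eta x (s x) *\<^sub>R xi x)"
  using nabla_zero[OF s] F_xi nabla_xi lin_on_neg[OF F_lin F_in_fib] F_F section_in_fib[OF s]
  by (simp add: fun_eq_iff)

end

theorem proposition4p7:
  fixes C :: "('m \<Rightarrow> real) set" and fib :: "'m \<Rightarrow> 'v::real_vector set"
    and Gam :: "('m \<Rightarrow> 'v) set" and m :: nat
    and rho :: "('m \<Rightarrow> 'v) \<Rightarrow> ('m \<Rightarrow> real) \<Rightarrow> ('m \<Rightarrow> real)"
    and br :: "('m \<Rightarrow> 'v) \<Rightarrow> ('m \<Rightarrow> 'v) \<Rightarrow> ('m \<Rightarrow> 'v)"
    and F :: "'m \<Rightarrow> 'v \<Rightarrow> 'v" and xi :: "'m \<Rightarrow> 'v"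
    and eta :: "'m \<Rightarrow> 'v \<Rightarrow> real" and g :: "'m \<Rightarrow> 'v \<Rightarrow> 'v \<Rightarrow> real"
    and nabla :: "('m \<Rightarrow> 'v) \<Rightarrow> ('m \<Rightarrow> 'v) \<Rightarrow> ('m \<Rightarrow> 'v)"
  assumes "K_contact_lie_algebroid C fib Gam m rho br F xi eta g"
    and "levi_civita C Gam rho br g nabla"
  shows "(\<forall>s1\<in>Gam. \<forall>s2\<in>Gam.
           rho s1 (\<lambda>x. eta x (s2 x)) - (\<lambda>x. eta x (nabla s1 s2 x))
             = (\<lambda>x. g x (nabla s1 xi x) (s2 x))
         \<and> (\<lambda>x. g x (nabla s1 xi x) (s2 x)) = Omega_E F g s1 s2)
         \<and> (\<forall>s\<in>Gam. nabla s (\<lambda>x. F x (xi x)) - (\<lambda>x. F x (nabla s xi x))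
           = (\<lambda>x. - s x + eta x (s x) *\<^sub>R xi x))"
proof -
  from assms(1) have lie: "lie_algebroid C fib Gam (2*m+1) rho br"
    and acr: "almost_contact_riemannian C fib Gam F xi eta g"
    and contact: "\<forall>s1\<in>Gam. \<forall>s2\<in>Gam. d_E rho br eta s1 s2 = Omega_E F g s1 s2"
    and killing: "\<forall>s1\<in>Gam. \<forall>s2\<in>Gam.
        rho xi (\<lambda>x. g x (s1 x) (s2 x)) - (\<lambda>x. g x (br xi s1 x) (s2 x))
          - (\<lambda>x. g x (s1 x) (br xi s2 x)) = 0"
    unfolding K_contact_lie_algebroid_def by blast+
  have "vector_bundle C fib Gam (2*m+1)"
    using lie unfolding lie_algebroid_def by blast
  then interpret almost_contact_levi_civita C fib Gam "2*m+1" F xi eta g rho br nabla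
    using acr assms(2)
    by (simp add: almost_contact_levi_civita_def almost_contact_bundle_def
        almost_contact_levi_civita_axioms_def)
  have Omega: "g x (nabla s1 xi x) (s2 x) = Omega_E F g s1 s2 x"
    if "s1 \<in> Gam" "s2 \<in> Gam" for s1 s2 x
  proof -
    have "g x (nabla s1 xi x) (s2 x) = d_E rho br eta s1 s2 x"
      using d_E_eta_eq_nabla_xi[OF killing_imp_nabla_xi_skew[OF killing] that] by (rule sym)
    also have "\<dots> = Omega_E F g s1 s2 x"
      using contact that by simp
    finally show ?thesis .
  qed
  have "rho s1 (\<lambda>x. eta x (s2 x)) - (\<lambda>x. eta x (nabla s1 s2 x)) = (\<lambda>x. g x (nabla s1 xi x) (s2 x))
      \<and> (\<lambda>x. g x (nabla s1 xi x) (s2 x)) = Omega_E F g s1 s2"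
    if "s1 \<in> Gam" "s2 \<in> Gam" for s1 s2
    using rho_eta[OF that] Omega[OF that] by auto
  moreover have "nabla s (\<lambda>x. F x (xi x)) - (\<lambda>x. F x (nabla s xi x))
      = (\<lambda>x. - s x + eta x (s x) *\<^sub>R xi x)" if "s \<in> Gam" for s
    using nabla_F_xi[OF nabla_xi_eq_neg_F[OF Omega that] that] .
  ultimately show ?thesis by blast
qed

end
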